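(* Let $\vec{\mathcal U}\in\Upsilon$ be full and let $\theta,\phi\in L$. Then $\phi\in Bel(\preceq_{\vec{\mathcal U}}*\preceq_{\{\theta\}})$ if and only if $\theta\mid\!\sim_{\vec{\mathcal U}}\phi$.
   Context: $L$ is a propositional language built from a finite set of propositional variables with the connectives $\neg,\wedge,\vee,\rightarrow,\top,\bot$; $W$ is the finite set of propositional worlds. For $\theta\in L$, $S_\theta=\{w\in W\mid w\models\theta\}$; $E\models\phi$ means $\bigcap_{\theta\in E}S_\theta\subseteq S_\phi$; $\models\phi$ means $\emptyset\models\phi$; $E$ is consistent iff $E\not\models\bot$. Sequences: finite sequences $\vec{\mathcal U}=(\mathcal U_0,\ldots,\mathcal U_k)$ of mutually disjoint subsets of $W$ (components may be empty, possibly repeatedly). $\mathrm{rank}^{\vec{\mathcal U}}(\theta)$ is the least $i$ with $\mathcal U_i\cap S_\theta\neq\emptyset$, $\infty$ if none ($i<\infty$ for all integers $i$). $\theta\mid\!\sim_{\vec{\mathcal U}}\phi$ iff $\mathrm{rank}^{\vec{\mathcal U}}(\theta)<\mathrm{rank}^{\vec{\mathcal U}}(\theta\wedge\neg\phi)$ or $\mathrm{rank}^{\vec{\mathcal U}}(\theta)=\infty$. $\vec{\mathcal U}$ is full iff $\bigcup_i\mathcal U_i=W$, empty iff $\bigcup_i\mathcal U_i=\emptyset$; $\Upsilon$ is the set of sequences which are full or empty. For $\vec{\mathcal U}\in\Upsilon$, $\theta\preceq_{\vec{\mathcal U}}\phi$ iff (not $\neg\theta\vee\neg\phi\mid\!\sim_{\vec{\mathcal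 U}}\theta$) or $\neg\phi\mid\!\sim_{\vec{\mathcal U}}\bot$. E-relation: a relation $\preceq\subseteq L\times L$ such that for all $\theta,\phi,\psi$: (E1) transitivity; (E2) $\theta\models\phi$ implies $\theta\preceq\phi$; (E3) $\theta\preceq\theta\wedge\phi$ or $\phi\preceq\theta\wedge\phi$; (E4) if $\bot\prec\psi$ for some $\psi$, then $\theta\preceq\phi$ for all $\theta$ implies $\models\phi$; $\prec$ is the strict part. Belief set: $Bel(\preceq)=\{\theta\mid\bot\prec\theta\}$ if $\bot\prec\theta$ for some $\theta$, and $Bel(\preceq)=L$ otherwise. Sequence revision: for $\vec{\mathcal U}=(\mathcal U_0,\ldots,\mathcal U_k)$, $\vec{\mathcal V}=(\mathcal V_0,\ldots,\mathcal V_m)$ in $\Upsilon$, if $\vec{\mathcal U}$ is full then $\vec{\mathcal U}*\vec{\mathcal V}=(\mathcal U_0\cap\mathcal V_0,\ldots,\mathcal U_k\cap\mathcal V_0,\ \ldots,\ \mathcal U_0\cap\mathcal V_m,\ldots,\mathcal U_k\cap\mathcal V_m)$; otherwise $\vec{\mathcal U}*\vec{\mathcal V}=\vec{\mathcal V}$. Revision of E-relations: every E-relation equals $\preceq_{\vec{\mathcal U}}$ for some $\vec{\mathcal U}\in\Upsilon$, and $\preceq_K*\preceq_E:=\preceq_{\vec{\mathcal U}*\vec{\mathcal V}}$ for any $\vec{\mathcal U},\vec{\mathcal V}\in\Upsilon$ with $\preceq_K=\preceq_{\vec{\mathcal U}}$, $\preceq_E=\preceq_{\vec{\mathcal V}}$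 (independent of the choice). Relation generated by a set $E\subseteq L$: $\theta\prec_E\phi$ iff $E\not\models\bot$, $\not\models\theta$, and for every $E'\subseteq E$ with $E'\cup\{\neg\phi\}$ consistent there is $E''\subseteq E$ with $|E'|<|E''|$ and $E''\cup\{\neg\theta\}$ consistent; $\theta\preceq_E\phi$ iff not $\phi\prec_E\theta$. (For finite $E$, $\preceq_E$ is an E-relation.) In particular $\preceq_{\{\theta\}}$ is this relation for $E=\{\theta\}$. *)

theory Defs
  imports Main "HOL-Library.Extended_Nat"
begin

datatype 'v form =
    Var 'v
  | Neg "'v form"
  | Conj "'v form" "'v form"
  | Disj "'v form" "'v form"
  | Imp "'v form" "'v form"
  | Top
  | Bot

text \<open>Worlds are valuations 'v \<Rightarrow> bool; W = UNIV (finite when 'v is finite).\<close>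

fun sat :: "('v \<Rightarrow> bool) \<Rightarrow> 'v form \<Rightarrow> bool" where
  "sat w (Var p) = w p"
| "sat w (Neg a) = (\<not> sat w a)"
| "sat w (Conj a b) = (sat w a \<and> sat w b)"
| "sat w (Disj a b) = (sat w a \<or> sat w b)"
| "sat w (Imp a b) = (sat w a \<longrightarrow> sat w b)"
| "sat w Top = True"
| "sat w Bot = False"

definition models :: "'v form \<Rightarrow> ('v \<Rightarrow> bool) set" where
  "models a = {w. sat w a}"

definition entails :: "'v form set \<Rightarrow> 'v form \<Rightarrow> bool" where
  "entails E a \<longleftrightarrow> (\<Inter>t\<in>E. models t) \<subseteq> models a"

definition valid :: "'v form \<Rightarrow> bool" where
  "valid a \<longleftrightarrow> entails {} a"

definition consistent :: "'v form set \<Rightarrow> bool" where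
  "consistent E \<longleftrightarrow> \<not> entails E Bot"

type_synonym 'v seq = "('v \<Rightarrow> bool) set list"

definition is_seq :: "'v seq \<Rightarrow> bool" where
  "is_seq U \<longleftrightarrow> U \<noteq> [] \<and>
     (\<forall>i j. i < length U \<and> j < length U \<and> i \<noteq> j \<longrightarrow> U ! i \<inter> U ! j = {})"

definition full :: "'v seq \<Rightarrow> bool" where
  "full U \<longleftrightarrow> \<Union>(set U) = UNIV"

definition empty_seq :: "'v seq \<Rightarrow> bool" where
  "empty_seq U \<longleftrightarrow> \<Union>(set U) = {}"

definition Upsilon :: "'v seq set" where
  "Upsilon = {U. is_seq U \<and> (full U \<or> empty_seq U)}"

definition rank :: "'v seq \<Rightarrow> 'v form \<Rightarrow> enat" where
  "rank U a = (if \<exists>i<length U. U ! i \<inter> models a \<noteq> {}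
               then enat (LEAST i. i < length U \<and> U ! i \<inter> models a \<noteq> {})
               else \<infinity>)"

definition nm_cons :: "'v seq \<Rightarrow> 'v form \<Rightarrow> 'v form \<Rightarrow> bool" where
  "nm_cons U a b \<longleftrightarrow> rank U a < rank U (Conj a (Neg b)) \<or> rank U a = \<infinity>"

type_synonym 'v rel = "'v form \<Rightarrow> 'v form \<Rightarrow> bool"

definition seq_rel :: "'v seq \<Rightarrow> 'v rel" where
  "seq_rel U a b \<longleftrightarrow> (\<not> nm_cons U (Disj (Neg a) (Neg b)) a) \<or> nm_cons U (Neg b) Bot"

definition strict :: "'v rel \<Rightarrow> 'v rel" where
  "strict R a b \<longleftrightarrow> R a b \<and> \<not> R b a"

definition Bel :: "'v rel \<Rightarrow> 'v form set" where
  "Bel R = (if \<exists>t. strict R Bot t then {t. strict R Bot t} else UNIV)"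

definition seq_rev :: "'v seq \<Rightarrow> 'v seq \<Rightarrow> 'v seq" where
  "seq_rev U V = (if full U then concat (map (\<lambda>Vj. map (\<lambda>Ui. Ui \<inter> Vj) U) V) else V)"

definition rel_rev :: "'v rel \<Rightarrow> 'v rel \<Rightarrow> 'v rel" where
  "rel_rev K E = seq_rel (seq_rev (SOME U. U \<in> Upsilon \<and> seq_rel U = K)
                                  (SOME V. V \<in> Upsilon \<and> seq_rel V = E))"

definition gen_strict :: "'v form set \<Rightarrow> 'v rel" where
  "gen_strict E a b \<longleftrightarrow> consistent E \<and> \<not> valid a \<and>
     (\<forall>E'. E' \<subseteq> E \<and> consistent (E' \<union> {Neg b}) \<longrightarrow>
        (\<exists>E''. E'' \<subseteq> E \<and> card E' < card E'' \<and> consistent (E'' \<union> {Neg a})))"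

definition gen_rel :: "'v form set \<Rightarrow> 'v rel" where
  "gen_rel E a b \<longleftrightarrow> \<not> gen_strict E b a"

end

theory Submission
  imports Defs
begin

text \<open>
  Belief sets, the conditional \<open>\<theta> |~ \<phi>\<close> and the relations \<open>seq_rel U\<close> are all comparisons
  of ranks of sets of worlds. Since every set of worlds is definable, a sequence representing
  \<open>gen_rel {\<theta>}\<close> has \<open>models \<theta>\<close> as its first nonempty component (and no nonempty
  component if \<open>\<theta>\<close> is inconsistent). Ranks in a revision \<open>U * V\<close> are lexicographic: first the rank in \<open>V\<close>, then
  the rank in \<open>U\<close> within that component of \<open>V\<close>. So the first nonempty component of \<open>U * V\<close>
  consists of the \<open>U\<close>-minimal \<open>\<theta>\<close>-worlds, and the beliefs after revision are the \<open>\<phi>\<close> true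
  in all of them, i.e. those with \<open>\<theta> |~ \<phi>\<close>. Fullness and \<open>|~\<close> are determined by
  \<open>seq_rel U\<close>, so it does not matter which representative \<open>rel_rev\<close> chooses.
\<close>

lemma models_simps [simp]:
  "models (Neg a) = - models a" "models (Conj a b) = models a \<inter> models b"
  "models (Disj a b) = models a \<union> models b" "models Top = UNIV" "models Bot = {}"
  by (auto simp: models_def)

fun set_rank :: "'v seq \<Rightarrow> ('v \<Rightarrow> bool) set \<Rightarrow> enat" where
  "set_rank [] X = \<infinity>"
| "set_rank (A # S) X = (if A \<inter> X = {} then eSuc (set_rank S X) else 0)"

lemma set_rank_eq_Least:
  "set_rank S X = (if \<exists>i<length S. S ! i \<inter> X \<noteq> {}
     then enat (LEAST i. i < length S \<and> S ! i \<inter> X \<noteq> {}) else \<infinity>)"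
proof (induction S)
  case Nil
  show ?case by simp
next
  case (Cons A S)
  show ?case
  proof (cases "A \<inter> X = {}")
    case disj: True
    show ?thesis
    proof (cases "\<exists>i<length S. S ! i \<inter> X \<noteq> {}")
      case True
      then obtain i where "i < length S" "S ! i \<inter> X \<noteq> {}" by blast
      then have "(LEAST i. i < length (A # S) \<and> (A # S) ! i \<inter> X \<noteq> {})
          = Suc (LEAST i. i < length S \<and> S ! i \<inter> X \<noteq> {})"
        using disj by (subst Least_Suc[where n = "Suc i"]) auto
      then show ?thesis using Cons.IH disj True by (auto simp: eSuc_enat Ex_less_Suc2)
    next
      case False
      then have "set_rank S X = \<infinity>" by (simp only: Cons.IH if_False)
      then show ?thesis using False disj by (simp add: Ex_less_Suc2)
    qed
  next
    case False
    then have "\<exists>i<length (A # S). (A # S) ! i \<inter> X \<noteq> {}" by (intro exI[of _ 0]) simp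
    then show ?thesis using False by (simp add: zero_enat_def)
  qed
qed

lemma rank_eq_set_rank: "rank S a = set_rank S (models a)"
  by (simp add: rank_def set_rank_eq_Least)

lemma set_rank_empty [simp]: "set_rank S {} = \<infinity>"
  by (induction S) auto

lemma set_rank_Un: "set_rank S (X \<union> Y) = min (set_rank S X) (set_rank S Y)"
proof (induction S)
  case (Cons A S)
  then show ?case
    by (cases "A \<inter> X = {}"; cases "A \<inter> Y = {}") (simp_all add: min_def Int_Un_distrib)
qed simp

lemma set_rank_antimono: "X \<subseteq> Y \<Longrightarrow> set_rank S Y \<le> set_rank S X"
  by (metis set_rank_Un min.cobounded1 sup.absorb2)

lemma set_rank_eq_enat_iff:
  "set_rank S X = enat j \<longleftrightarrow> j < length S \<and> S ! j \<inter> X \<noteq> {} \<and> (\<forall>i<j. S ! i \<inter> X = {})"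
proof (induction S arbitrary: j)
  case (Cons A S)
  show ?case
  proof (cases j)
    case 0
    then show ?thesis by (simp add: enat_0)
  next
    case (Suc m)
    then show ?thesis using Cons.IH[of m] by (auto simp: eSuc_enat_iff All_less_Suc2 zero_enat_def)
  qed
qed simp

lemma set_rank_eq_infinity_iff: "set_rank S X = \<infinity> \<longleftrightarrow> (\<forall>A\<in>set S. A \<inter> X = {})"
  by (induction S) (simp_all add: eSuc_plus_1 plus_eq_infty_iff_enat)

lemma set_rank_finite_if_full: "full S \<Longrightarrow> X \<noteq> {} \<Longrightarrow> set_rank S X \<noteq> \<infinity>"
  by (auto simp: set_rank_eq_infinity_iff full_def)

lemma mem_nth_iff_set_rank_singleton:
  assumes "is_seq S" "j < length S"
  shows "w \<in> S ! j \<longleftrightarrow> set_rank S {w} = enat j"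
proof -
  have "w \<notin> S ! i" if "i < j" "w \<in> S ! j" for i
  proof -
    have "S ! i \<inter> S ! j = {}"
      using assms that(1) less_trans[OF that(1) assms(2)] unfolding is_seq_def by blast
    then show ?thesis using that(2) by blast
  qed
  then show ?thesis using assms(2) by (auto simp: set_rank_eq_enat_iff)
qed

lemma seq_rel_iff_set_rank: "seq_rel S a b \<longleftrightarrow> set_rank S (- models a) \<le> set_rank S (- models b)"
proof -
  have "(- models a \<union> - models b) \<inter> - models a = - models a" by blast
  then show ?thesis
    by (auto simp: seq_rel_def nm_cons_def rank_eq_set_rank set_rank_Un min_def not_le
        dest: enat_ile)
qed

lemma nm_cons_iff_set_rank:
  "nm_cons S a b \<longleftrightarrow>
    set_rank S (models a) < set_rank S (models a \<inter> - models b) \<or> set_rank S (models a) = \<infinity>"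
  by (simp add: nm_cons_def rank_eq_set_rank)

lemma nm_cons_iff_seq_rel:
  "nm_cons S a b \<longleftrightarrow> \<not> seq_rel S (Neg (Conj a (Neg b))) (Neg a) \<or> seq_rel S (Neg Bot) (Neg a)"
  by (auto simp: nm_cons_iff_set_rank seq_rel_iff_set_rank not_le)

lemma Bel_seq_rel: "Bel (seq_rel S) =
  (if set_rank S UNIV = \<infinity> then UNIV else {t. set_rank S UNIV < set_rank S (- models t)})"
proof -
  have strict: "strict (seq_rel S) Bot = (\<lambda>t. set_rank S UNIV < set_rank S (- models t))"
    by (auto simp: fun_eq_iff strict_def seq_rel_iff_set_rank)
  have "(\<exists>t. set_rank S UNIV < set_rank S (- models t)) \<longleftrightarrow> set_rank S UNIV \<noteq> \<infinity>"
  proof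
    show "set_rank S UNIV \<noteq> \<infinity>" if "\<exists>t. set_rank S UNIV < set_rank S (- models t)"
      using that by (metis enat_ord_code(6))
    show "\<exists>t. set_rank S UNIV < set_rank S (- models t)" if "set_rank S UNIV \<noteq> \<infinity>"
      using that by (intro exI[of _ Top]) (simp add: less_le)
  qed
  then show ?thesis unfolding Bel_def strict by simp
qed

lemma full_if_seq_rel_eq:
  assumes "full U" "U' \<in> Upsilon" "seq_rel U' = seq_rel U"
  shows "full U'"
proof (rule ccontr)
  have top_bot: "seq_rel S Top Bot \<longleftrightarrow> set_rank S UNIV = \<infinity>" for S :: "'v seq"
    by (simp add: seq_rel_iff_set_rank)
  assume "\<not> full U'"
  then have "set_rank U' UNIV = \<infinity>"
    using assms(2) by (auto simp: Upsilon_def empty_seq_def set_rank_eq_infinity_iff)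
  then show False
    using assms(1,3) top_bot[of U] top_bot[of U'] set_rank_finite_if_full[of U UNIV] by simp
qed

lemma ex_models_eq:
  fixes X :: "('v::finite \<Rightarrow> bool) set"
  shows "\<exists>a. models a = X"
proof -
  have agree: "\<exists>a. models a = {w'. \<forall>v\<in>P. w' v = w v}"
    if "finite P" for P :: "'v set" and w :: "'v \<Rightarrow> bool"
    using that
  proof (induction P rule: finite_induct)
    case empty
    show ?case by (rule exI[of _ Top]) simp
  next
    case (insert v P)
    then obtain a where "models a = {w'. \<forall>v\<in>P. w' v = w v}" by blast
    then show ?case
      by (intro exI[of _ "Conj (if w v then Var v else Neg (Var v)) a"]) (auto simp: models_def)
  qed
  have singleton: "\<exists>a. models a = {w}" for w :: "'v \<Rightarrow> bool"
    using agree[of UNIV w] by (simp add: fun_eq_iff[symmetric])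
  have "finite X" by simp
  then show ?thesis
  proof (induction X rule: finite_induct)
    case empty
    show ?case by (rule exI[of _ Bot]) simp
  next
    case (insert w X)
    then obtain a b where "models a = X" "models b = {w}" using singleton by blast
    then show ?case by (intro exI[of _ "Disj b a"]) auto
  qed
qed

lemma gen_strict_singleton_iff:
  fixes t a b :: "'v form"
  shows "gen_strict {t} a b \<longleftrightarrow> models t \<noteq> {} \<and> models a \<noteq> UNIV \<and>
     (models b \<noteq> UNIV \<longrightarrow> models t \<inter> - models a \<noteq> {}) \<and> models t \<subseteq> models b"
proof -
  have all_subsets: "(\<forall>E'. E' \<subseteq> {t} \<and> P E' \<longrightarrow> Q E') \<longleftrightarrow> (P {} \<longrightarrow> Q {}) \<and> (P {t} \<longrightarrow> Q {t})"
    for P Q :: "'v form set \<Rightarrow> bool"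
    by (auto simp: subset_singleton_iff)
  have ex_subsets: "(\<exists>E''. E'' \<subseteq> {t} \<and> P E'') \<longleftrightarrow> P {} \<or> P {t}" for P :: "'v form set \<Rightarrow> bool"
    by (auto simp: subset_singleton_iff)
  show ?thesis
    unfolding gen_strict_def valid_def consistent_def
    by (simp only: all_subsets ex_subsets) (simp add: entails_def, blast)
qed

lemma set_rank_two_compl:
  "set_rank [T, - T] X = (if T \<inter> X \<noteq> {} then 0 else if X \<noteq> {} then 1 else \<infinity>)"
proof -
  have "- T \<inter> X = {} \<longleftrightarrow> X = {}" if "T \<inter> X = {}" using that by blast
  then show ?thesis by (simp add: one_eSuc)
qed

lemma set_rank_two_compl_le_iff:
  "set_rank [T, - T] A \<le> set_rank [T, - T] B \<longleftrightarrow>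
     \<not> (B \<noteq> {} \<and> (A \<noteq> {} \<longrightarrow> T \<inter> B \<noteq> {}) \<and> T \<inter> A = {})"
  unfolding set_rank_two_compl
  by (cases "T \<inter> A = {}"; cases "A = {}"; cases "T \<inter> B = {}"; cases "B = {}") simp_all

lemma ex_Upsilon_seq_rel_eq_gen_rel_singleton: "\<exists>V. V \<in> Upsilon \<and> seq_rel V = gen_rel {\<theta>}"
proof (cases "models \<theta> = {}")
  case True
  have "[{}] \<in> Upsilon" by (simp add: Upsilon_def is_seq_def empty_seq_def)
  moreover have "seq_rel [{}] = gen_rel {\<theta>}"
    using True by (simp add: fun_eq_iff seq_rel_iff_set_rank gen_rel_def gen_strict_singleton_iff)
  ultimately show ?thesis by blast
next
  case False
  let ?T = "models \<theta>"
  have "[?T, - ?T] \<in> Upsilon"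
    by (auto simp: Upsilon_def is_seq_def full_def less_Suc_eq numeral_2_eq_2)
  moreover have "seq_rel [?T, - ?T] a b \<longleftrightarrow> gen_rel {\<theta>} a b" for a b
    unfolding seq_rel_iff_set_rank set_rank_two_compl_le_iff gen_rel_def gen_strict_singleton_iff
    using False by blast
  ultimately show ?thesis by blast
qed

lemma set_rank_le_UNIV_if_seq_rel_eq_gen_rel_singleton:
  fixes V :: "('v::finite) seq"
  assumes "seq_rel V = gen_rel {\<theta>}"
  shows "set_rank V X \<le> set_rank V UNIV \<longleftrightarrow> (models \<theta> \<noteq> {} \<longrightarrow> models \<theta> \<inter> X \<noteq> {})"
proof -
  obtain a where a: "models a = - X" using ex_models_eq by blast
  have "set_rank V X \<le> set_rank V UNIV \<longleftrightarrow> seq_rel V a Bot"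
    by (simp add: seq_rel_iff_set_rank a)
  also have "\<dots> \<longleftrightarrow> \<not> gen_strict {\<theta>} Bot a"
    by (simp add: assms gen_rel_def)
  also have "\<dots> \<longleftrightarrow> (models \<theta> \<noteq> {} \<longrightarrow> models \<theta> \<inter> X \<noteq> {})"
    by (auto simp: gen_strict_singleton_iff a)
  finally show ?thesis .
qed

lemma nth_eq_models_if_seq_rel_eq_gen_rel_singleton:
  fixes V :: "('v::finite) seq"
  assumes "is_seq V" "seq_rel V = gen_rel {\<theta>}" "set_rank V UNIV = enat j"
  shows "V ! j = models \<theta>"
proof -
  have j: "j < length V" using assms(3) by (simp add: set_rank_eq_enat_iff)
  have "models \<theta> \<noteq> {}"
    using set_rank_le_UNIV_if_seq_rel_eq_gen_rel_singleton[OF assms(2), of "{}"] assms(3) by auto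
  then have "set_rank V {w} \<le> enat j \<longleftrightarrow> w \<in> models \<theta>" for w
    using set_rank_le_UNIV_if_seq_rel_eq_gen_rel_singleton[OF assms(2), of "{w}"] assms(3) by auto
  moreover have "set_rank V {w} \<le> enat j \<longleftrightarrow> set_rank V {w} = enat j" for w
    using set_rank_antimono[of "{w}" UNIV V] assms(3) by auto
  ultimately show ?thesis
    using mem_nth_iff_set_rank_singleton[OF assms(1) j] by blast
qed

lemma seq_rev_Nil: "full U \<Longrightarrow> seq_rev U [] = []"
  by (simp add: seq_rev_def)

lemma seq_rev_Cons: "full U \<Longrightarrow> seq_rev U (B # V) = map (\<lambda>A. A \<inter> B) U @ seq_rev U V"
  by (simp add: seq_rev_def)

lemma set_rank_append:
  "set_rank (S @ T) X =
    (if set_rank S X = \<infinity> then enat (length S) + set_rank T X else set_rank S X)"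
  by (induction S)
    (simp_all add: eSuc_enat[symmetric] iadd_Suc eSuc_plus_1 plus_eq_infty_iff_enat enat_0)

lemma set_rank_map_Int: "set_rank (map (\<lambda>A. A \<inter> B) S) X = set_rank S (B \<inter> X)"
  by (induction S) (simp_all add: Int_assoc)

lemma set_rank_seq_rev:
  assumes "full U"
  shows "set_rank (seq_rev U V) X = (case set_rank V X of
      \<infinity> \<Rightarrow> \<infinity> | enat j \<Rightarrow> enat (j * length U) + set_rank U (V ! j \<inter> X))"
proof (induction V)
  case Nil
  show ?case by (simp add: seq_rev_Nil assms)
next
  case (Cons B V)
  show ?case
  proof (cases "B \<inter> X = {}")
    case True
    then have step: "set_rank (seq_rev U (B # V)) X = enat (length U) + set_rank (seq_rev U V) X"
      by (simp add: seq_rev_Cons assms set_rank_append set_rank_map_Int)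
    show ?thesis
    proof (cases "set_rank V X")
      case (enat j)
      have "set_rank (seq_rev U (B # V)) X
          = enat (length U) + (enat (j * length U) + set_rank U (V ! j \<inter> X))"
        using step Cons.IH enat by simp
      also have "\<dots> = enat (Suc j * length U) + set_rank U (V ! j \<inter> X)"
        by (simp add: add.assoc[symmetric])
      finally show ?thesis using True enat by (simp add: eSuc_enat)
    next
      case infinity
      then show ?thesis using True step Cons.IH by simp
    qed
  next
    case False
    then show ?thesis
      by (simp add: seq_rev_Cons set_rank_append set_rank_map_Int assms set_rank_finite_if_full
          zero_enat_def)
  qed
qed

lemma set_rank_seq_rev_eq_infinity_iff:
  assumes "full U"
  shows "set_rank (seq_rev U V) X = \<infinity> \<longleftrightarrow> set_rank V X = \<infinity>"
proof (cases "set_rank V X")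
  case (enat j)
  then have "V ! j \<inter> X \<noteq> {}" by (simp add: set_rank_eq_enat_iff)
  then show ?thesis
    using enat set_rank_finite_if_full[OF assms]
    by (simp add: set_rank_seq_rev assms plus_eq_infty_iff_enat)
qed (simp add: set_rank_seq_rev assms)

lemma set_rank_seq_rev_less_if_less:
  assumes "full U" "set_rank V X < set_rank V Y"
  shows "set_rank (seq_rev U V) X < set_rank (seq_rev U V) Y"
proof -
  obtain j where j: "set_rank V X = enat j"
    using assms(2) by (cases "set_rank V X") simp_all
  then have "V ! j \<inter> X \<noteq> {}" by (simp add: set_rank_eq_enat_iff)
  then have "set_rank U (V ! j \<inter> X) \<noteq> \<infinity>" by (rule set_rank_finite_if_full[OF assms(1)])
  then obtain i where i: "set_rank U (V ! j \<inter> X) = enat i" by auto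
  then have "i < length U" by (simp add: set_rank_eq_enat_iff)
  then have X: "set_rank (seq_rev U V) X < enat (Suc j * length U)"
    using j i by (simp add: set_rank_seq_rev assms(1))
  show ?thesis
  proof (cases "set_rank V Y")
    case (enat j')
    then have "Suc j \<le> j'" using assms(2) j by simp
    note X
    also have "enat (Suc j * length U) \<le> enat (j' * length U)"
      using \<open>Suc j \<le> j'\<close> by (simp only: enat_ord_simps(1) mult_le_mono1)
    also have "\<dots> \<le> enat (j' * length U) + set_rank U (V ! j' \<inter> Y)"
      by (rule add_increasing2) simp_all
    also have "\<dots> = set_rank (seq_rev U V) Y"
      using enat by (simp add: set_rank_seq_rev assms(1))
    finally show ?thesis .
  next
    case infinity
    then have "set_rank (seq_rev U V) Y = \<infinity>"
      by (simp add: set_rank_seq_rev_eq_infinity_iff assms(1))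
    then show ?thesis by (metis X order.strict_trans2 enat_ord_code(3))
  qed
qed

lemma set_rank_seq_rev_less_iff_same:
  assumes "full U" "set_rank V X = enat j" "set_rank V Y = enat j"
  shows "set_rank (seq_rev U V) X < set_rank (seq_rev U V) Y \<longleftrightarrow>
    set_rank U (V ! j \<inter> X) < set_rank U (V ! j \<inter> Y)"
  using assms by (simp add: set_rank_seq_rev enat_add_left_cancel_less)

lemma Bel_seq_rev_gen_rel_singleton:
  fixes U V :: "('v::finite) seq"
  assumes U: "full U" and V: "is_seq V" "seq_rel V = gen_rel {\<theta>}"
  shows "\<phi> \<in> Bel (seq_rel (seq_rev U V)) \<longleftrightarrow> nm_cons U \<theta> \<phi>"
proof (cases "models \<theta> = {}")
  case True
  then have "set_rank V UNIV = \<infinity>"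
    using set_rank_le_UNIV_if_seq_rel_eq_gen_rel_singleton[OF V(2), of "{}"] by simp
  then have "set_rank (seq_rev U V) UNIV = \<infinity>" by (simp add: set_rank_seq_rev_eq_infinity_iff U)
  then show ?thesis using True by (simp add: Bel_seq_rel nm_cons_iff_set_rank)
next
  case False
  let ?W = "seq_rev U V" and ?T = "models \<theta>" and ?F = "- models \<phi>"
  have le_UNIV: "set_rank V X \<le> set_rank V UNIV \<longleftrightarrow> ?T \<inter> X \<noteq> {}" for X
    using set_rank_le_UNIV_if_seq_rel_eq_gen_rel_singleton[OF V(2)] False by simp
  then obtain j where j: "set_rank V UNIV = enat j" using False by (cases "set_rank V UNIV") auto
  have Vj: "V ! j = ?T" using nth_eq_models_if_seq_rel_eq_gen_rel_singleton[OF V j] .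
  have T: "set_rank U ?T \<noteq> \<infinity>" using set_rank_finite_if_full[OF U False] .
  have "set_rank ?W UNIV \<noteq> \<infinity>" using j by (simp add: set_rank_seq_rev_eq_infinity_iff U)
  then have "\<phi> \<in> Bel (seq_rel ?W) \<longleftrightarrow> set_rank ?W UNIV < set_rank ?W ?F"
    by (simp add: Bel_seq_rel)
  also have "\<dots> \<longleftrightarrow> nm_cons U \<theta> \<phi>"
  proof (cases "?T \<inter> ?F = {}")
    case True
    then have "set_rank V UNIV < set_rank V ?F" using le_UNIV[of ?F] by simp
    then have "set_rank ?W UNIV < set_rank ?W ?F" by (rule set_rank_seq_rev_less_if_less[OF U])
    moreover have "nm_cons U \<theta> \<phi>" using True T by (simp add: nm_cons_iff_set_rank)
    ultimately show ?thesis by simp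
  next
    case False
    then have "set_rank V ?F = enat j"
      using le_UNIV[of ?F] set_rank_antimono[of ?F UNIV V] j by simp
    then have "set_rank ?W UNIV < set_rank ?W ?F \<longleftrightarrow> set_rank U ?T < set_rank U (?T \<inter> ?F)"
      using set_rank_seq_rev_less_iff_same[OF U j] Vj by simp
    then show ?thesis using T unfolding nm_cons_iff_set_rank by blast
  qed
  finally show ?thesis .
qed

theorem proposition9:
  fixes U :: "('v::finite) seq" and \<theta> \<phi> :: "'v form"
  assumes "U \<in> Upsilon" and "full U"
  shows "\<phi> \<in> Bel (rel_rev (seq_rel U) (gen_rel {\<theta>})) \<longleftrightarrow> nm_cons U \<theta> \<phi>"
proof -
  define K where "K = (SOME K. K \<in> Upsilon \<and> seq_rel K = seq_rel U)"
  define V where "V = (SOME V. V \<in> Upsilon \<and> seq_rel V = gen_rel {\<theta>})"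
  have K: "K \<in> Upsilon \<and> seq_rel K = seq_rel U"
    unfolding K_def by (rule someI[of _ U]) (simp add: assms(1))
  have V: "V \<in> Upsilon \<and> seq_rel V = gen_rel {\<theta>}"
    unfolding V_def by (rule someI_ex) (rule ex_Upsilon_seq_rel_eq_gen_rel_singleton)
  have "full K" using full_if_seq_rel_eq[OF assms(2)] K by blast
  have "\<phi> \<in> Bel (rel_rev (seq_rel U) (gen_rel {\<theta>})) \<longleftrightarrow> \<phi> \<in> Bel (seq_rel (seq_rev K V))"
    by (simp add: rel_rev_def K_def V_def)
  also have "\<dots> \<longleftrightarrow> nm_cons K \<theta> \<phi>"
    using Bel_seq_rev_gen_rel_singleton[OF \<open>full K\<close>] V by (simp add: Upsilon_def)
  also have "\<dots> \<longleftrightarrow> nm_cons U \<theta> \<phi>"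
    using K by (simp add: nm_cons_iff_seq_rel)
  finally show ?thesis .
qed

end
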